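(* Let $K$ be a $W$-set for a continuous flow on a compact manifold $M$ which is not global, and let $\mathcal{W}$ be its witness region. Then $L:=M\setminus\mathcal{W}$ is nonempty and is the maximal compact invariant set contained in $M\setminus K$; consequently $L$ is an isolated invariant set. Moreover, $K\cup L$ is a global $W$-set.
   Context: For a continuous flow, $\omega(x)$ and $\omega^*(x)$ denote the $\omega$- and $\alpha$-limit sets of $x$. A compact invariant set is isolated if it is the maximal invariant subset of some compact neighbourhood of itself. Let $K$ be a compact invariant set. A point $x$ is witnessed by $K$ if its trajectory meets every neighbourhood of $K$ (equivalently $(\omega(x)\cup\omega^*(x))\cap K\neq\emptyset$). $K$ is a $W$-set if it has a neighbourhood all of whose points are witnessed by $K$; its witness region $\mathcal{W}(K)$ is the set of all points witnessed by $K$; $K$ is global if $\mathcal{W}(K)=M$. *)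

theory Defs
  imports "HOL-Analysis.Analysis"
begin

definition manifold :: "'a::metric_space set \<Rightarrow> 'n::euclidean_space itself \<Rightarrow> bool" where
  "manifold M _ \<longleftrightarrow>
     (\<forall>x\<in>M. \<exists>U V. openin (top_of_set M) U \<and> x \<in> U \<and> open (V::'n set) \<and> U homeomorphic V)"

definition is_flow :: "'a::topological_space set \<Rightarrow> (real \<Rightarrow> 'a \<Rightarrow> 'a) \<Rightarrow> bool" where
  "is_flow M \<phi> \<longleftrightarrow>
     continuous_on (UNIV \<times> M) (\<lambda>(t, x). \<phi> t x) \<and>
     (\<forall>t. \<forall>x\<in>M. \<phi> t x \<in> M) \<and>
     (\<forall>x\<in>M. \<phi> 0 x = x) \<and>
     (\<forall>s t. \<forall>x\<in>M. \<phi> (s + t) x = \<phi> s (\<phi> t x))"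

definition invariant :: "'a set \<Rightarrow> (real \<Rightarrow> 'a \<Rightarrow> 'a) \<Rightarrow> 'a set \<Rightarrow> bool" where
  "invariant M \<phi> S \<longleftrightarrow> S \<subseteq> M \<and> (\<forall>t. \<forall>x\<in>S. \<phi> t x \<in> S)"

definition open_nbhd :: "'a::topological_space set \<Rightarrow> 'a set \<Rightarrow> 'a set \<Rightarrow> bool" where
  "open_nbhd M K U \<longleftrightarrow> openin (top_of_set M) U \<and> K \<subseteq> U"

text \<open>x is witnessed by K: its trajectory meets every neighbourhood of K in M
  (it suffices to consider open neighbourhoods).\<close>
definition witnessed :: "'a::topological_space set \<Rightarrow> (real \<Rightarrow> 'a \<Rightarrow> 'a) \<Rightarrow> 'a set \<Rightarrow> 'a \<Rightarrow> bool" where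
  "witnessed M \<phi> K x \<longleftrightarrow> (\<forall>U. open_nbhd M K U \<longrightarrow> (\<exists>t. \<phi> t x \<in> U))"

definition witness_region :: "'a::topological_space set \<Rightarrow> (real \<Rightarrow> 'a \<Rightarrow> 'a) \<Rightarrow> 'a set \<Rightarrow> 'a set" where
  "witness_region M \<phi> K = {x \<in> M. witnessed M \<phi> K x}"

definition W_set :: "'a::topological_space set \<Rightarrow> (real \<Rightarrow> 'a \<Rightarrow> 'a) \<Rightarrow> 'a set \<Rightarrow> bool" where
  "W_set M \<phi> K \<longleftrightarrow> compact K \<and> invariant M \<phi> K \<and>
     (\<exists>U. open_nbhd M K U \<and> (\<forall>x\<in>U. witnessed M \<phi> K x))"

definition global :: "'a::topological_space set \<Rightarrow> (real \<Rightarrow> 'a \<Rightarrow> 'a) \<Rightarrow> 'a set \<Rightarrow> bool" where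
  "global M \<phi> K \<longleftrightarrow> witness_region M \<phi> K = M"

definition isolated_invariant :: "'a::topological_space set \<Rightarrow> (real \<Rightarrow> 'a \<Rightarrow> 'a) \<Rightarrow> 'a set \<Rightarrow> bool" where
  "isolated_invariant M \<phi> K \<longleftrightarrow> compact K \<and> invariant M \<phi> K \<and>
     (\<exists>N. compact N \<and> N \<subseteq> M \<and> (\<exists>U. open_nbhd M K U \<and> U \<subseteq> N) \<and>
          (\<forall>S. invariant M \<phi> S \<and> S \<subseteq> N \<longrightarrow> S \<subseteq> K))"

end

theory Submission
  imports Defs
begin

text \<open>Pick an open neighbourhood U of K consisting of witnessed points. A point is witnessed
  iff its orbit enters U, so the witness region W is the union of the open preimages of U
  under the time-t maps; hence L = M - W is closed, thus compact, and invariant. A compact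
  invariant set S disjoint from K has the open neighbourhood M - S of K, which its orbits
  never enter, so S \<subseteq> L; the same argument with a neighbourhood of K separated from L gives
  isolation. Finally every point of M is witnessed by K or lies in L, so K \<union> L is global.\<close>

lemma flow_continuous_on_time:
  assumes "is_flow M \<phi>"
  shows "continuous_on M (\<phi> t)"
proof -
  have "continuous_on M ((\<lambda>(t, x). \<phi> t x) \<circ> (\<lambda>x. (t, x)))"
    using assms unfolding is_flow_def
    by (intro continuous_on_compose) (auto intro!: continuous_intros elim: continuous_on_subset)
  then show ?thesis by (simp add: o_def)
qed

lemma witnessed_mono:
  assumes "witnessed M \<phi> K x" "K \<subseteq> K'"
  shows "witnessed M \<phi> K' x"
  using assms unfolding witnessed_def open_nbhd_def by blast

lemma witnessed_if_mem:
  assumes "is_flow M \<phi>" "x \<in> M" "x \<in> K"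
  shows "witnessed M \<phi> K x"
  using assms unfolding witnessed_def open_nbhd_def is_flow_def by (metis subsetD)

lemma witnessed_flow_imp_witnessed:
  assumes "is_flow M \<phi>" "x \<in> M" "witnessed M \<phi> K (\<phi> t x)"
  shows "witnessed M \<phi> K x"
  unfolding witnessed_def
proof (intro allI impI)
  fix V assume "open_nbhd M K V"
  then obtain s where "\<phi> s (\<phi> t x) \<in> V" using assms(3) unfolding witnessed_def by blast
  moreover have "\<phi> (s + t) x = \<phi> s (\<phi> t x)" using assms(1,2) unfolding is_flow_def by blast
  ultimately show "\<exists>t. \<phi> t x \<in> V" by metis
qed

lemma subset_witness_region:
  assumes "is_flow M \<phi>" "K \<subseteq> M"
  shows "K \<subseteq> witness_region M \<phi> K"
  using assms witnessed_if_mem unfolding witness_region_def by blast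

lemma invariant_Diff_witness_region:
  assumes "is_flow M \<phi>"
  shows "invariant M \<phi> (M - witness_region M \<phi> K)"
proof -
  have "\<phi> t x \<in> M" if "x \<in> M" for t x using assms that unfolding is_flow_def by blast
  then show ?thesis
    using witnessed_flow_imp_witnessed[OF assms]
    unfolding invariant_def witness_region_def by blast
qed

lemma witness_region_eq_Union_preimages:
  assumes "is_flow M \<phi>" "open_nbhd M K U" "\<forall>x\<in>U. witnessed M \<phi> K x"
  shows "witness_region M \<phi> K = (\<Union>t. M \<inter> \<phi> t -` U)"
proof
  show "witness_region M \<phi> K \<subseteq> (\<Union>t. M \<inter> \<phi> t -` U)"
    using assms(2) unfolding witness_region_def witnessed_def by blast
  show "(\<Union>t. M \<inter> \<phi> t -` U) \<subseteq> witness_region M \<phi> K"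
    using assms(3) witnessed_flow_imp_witnessed[OF assms(1)] unfolding witness_region_def by blast
qed

lemma openin_witness_region:
  assumes "is_flow M \<phi>" "W_set M \<phi> K"
  shows "openin (top_of_set M) (witness_region M \<phi> K)"
proof -
  obtain U where U: "open_nbhd M K U" "\<forall>x\<in>U. witnessed M \<phi> K x"
    using assms(2) unfolding W_set_def by blast
  have "openin (top_of_set M) (M \<inter> \<phi> t -` U)" for t
  proof (rule continuous_openin_preimage[OF flow_continuous_on_time[OF assms(1)]])
    show "\<phi> t \<in> M \<rightarrow> M" using assms(1) unfolding is_flow_def by blast
    show "openin (top_of_set M) U" using U(1) unfolding open_nbhd_def by blast
  qed
  then show ?thesis
    unfolding witness_region_eq_Union_preimages[OF assms(1) U] by blast
qed

lemma compact_Diff_witness_region: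
  fixes M :: "'a::t2_space set"
  assumes "compact M" "is_flow M \<phi>" "W_set M \<phi> K"
  shows "compact (M - witness_region M \<phi> K)"
  using openin_witness_region[OF assms(2,3)] assms(1)
  by (metis closedin_compact closedin_diff closedin_topspace topspace_euclidean_subtopology)

lemma invariant_subset_Diff_witness_region:
  assumes "invariant M \<phi> S" "open_nbhd M K V" "S \<inter> V = {}"
  shows "S \<subseteq> M - witness_region M \<phi> K"
proof
  fix x assume "x \<in> S"
  then have "\<phi> t x \<in> S" for t using assms(1) unfolding invariant_def by blast
  then have "\<not> witnessed M \<phi> K x" using assms(2,3) unfolding witnessed_def by blast
  then show "x \<in> M - witness_region M \<phi> K"
    using \<open>x \<in> S\<close> assms(1) unfolding invariant_def witness_region_def by blast
qed

lemma compact_invariant_subset_Diff_witness_region: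
  fixes S :: "'a::t2_space set"
  assumes "compact S" "invariant M \<phi> S" "S \<subseteq> M - K" "K \<subseteq> M"
  shows "S \<subseteq> M - witness_region M \<phi> K"
proof (rule invariant_subset_Diff_witness_region[OF assms(2)])
  have "openin (top_of_set M) (M - S)"
    using compact_imp_closed[OF assms(1)]
    by (metis Diff_eq Int_commute open_Compl openin_open_Int)
  then show "open_nbhd M K (M - S)" using assms(3,4) unfolding open_nbhd_def by blast
qed blast

lemma isolated_invariant_Diff_witness_region:
  fixes M :: "'a::t4_space set"
  assumes "compact M" "is_flow M \<phi>" "W_set M \<phi> K"
  defines "L \<equiv> M - witness_region M \<phi> K"
  shows "isolated_invariant M \<phi> L"
proof -
  have K: "compact K" "K \<subseteq> M" using assms(3) unfolding W_set_def invariant_def by auto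
  have L: "compact L" "invariant M \<phi> L"
    using compact_Diff_witness_region[OF assms(1-3)] invariant_Diff_witness_region[OF assms(2)]
    unfolding L_def by auto
  have "L \<inter> K = {}" using subset_witness_region[OF assms(2) K(2)] unfolding L_def by blast
  then obtain A B where AB: "open A" "open B" "L \<subseteq> A" "K \<subseteq> B" "A \<inter> B = {}"
    using t4_space[of L K] L(1) K(1) compact_imp_closed by metis
  have "compact (M - B)"
    using assms(1) AB(2) by (simp add: Diff_eq compact_Int_closed closed_Compl)
  moreover have "open_nbhd M L (M \<inter> A)"
    using AB(1,3) L(2) unfolding open_nbhd_def invariant_def by (auto simp: openin_open_Int)
  moreover have "open_nbhd M K (M \<inter> B)"
    using AB(2,4) K(2) unfolding open_nbhd_def by (auto simp: openin_open_Int)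
  then have "S \<subseteq> L" if "invariant M \<phi> S" "S \<subseteq> M - B" for S
  proof -
    have "S \<inter> (M \<inter> B) = {}" using that(2) by blast
    then show ?thesis
      using invariant_subset_Diff_witness_region[OF that(1) \<open>open_nbhd M K (M \<inter> B)\<close>]
      unfolding L_def by blast
  qed
  moreover have "M \<inter> A \<subseteq> M - B" using AB(5) by blast
  ultimately show ?thesis
    unfolding isolated_invariant_def
    by (intro conjI L exI[of _ "M - B"] exI[of _ "M \<inter> A"]) auto
qed

lemma global_Un_Diff_witness_region:
  assumes "is_flow M \<phi>" "K \<subseteq> M"
  shows "global M \<phi> (K \<union> (M - witness_region M \<phi> K))"
  unfolding global_def witness_region_def
  using witnessed_mono[of M \<phi> K _ "K \<union> (M - witness_region M \<phi> K)"]
    witnessed_if_mem[OF assms(1), of _ "K \<union> (M - witness_region M \<phi> K)"]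
  by (auto simp: witness_region_def)

lemma W_set_if_global:
  assumes "compact K" "invariant M \<phi> K" "global M \<phi> K"
  shows "W_set M \<phi> K"
proof -
  have "open_nbhd M K M" using assms(2) unfolding open_nbhd_def invariant_def by auto
  then show ?thesis
    using assms unfolding W_set_def global_def witness_region_def by blast
qed

theorem corollary7p2:
  fixes M :: "'a::metric_space set" and \<phi> :: "real \<Rightarrow> 'a \<Rightarrow> 'a" and K :: "'a set"
  assumes "compact M" and "manifold M TYPE('n::euclidean_space)"
    and "is_flow M \<phi>"
    and "W_set M \<phi> K" and "\<not> global M \<phi> K"
  defines "L \<equiv> M - witness_region M \<phi> K"
  shows "L \<noteq> {}
    \<and> compact L \<and> invariant M \<phi> L \<and> L \<subseteq> M - K
    \<and> (\<forall>S. compact S \<and> invariant M \<phi> S \<and> S \<subseteq> M - K \<longrightarrow> S \<subseteq> L)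
    \<and> isolated_invariant M \<phi> L
    \<and> W_set M \<phi> (K \<union> L) \<and> global M \<phi> (K \<union> L)"
proof -
  have K: "compact K" "invariant M \<phi> K" "K \<subseteq> M"
    using assms(4) unfolding W_set_def invariant_def by auto
  have "L \<noteq> {}"
    using assms(5) unfolding L_def global_def witness_region_def by blast
  moreover have L: "compact L" "invariant M \<phi> L"
    unfolding L_def
    using compact_Diff_witness_region[OF assms(1,3,4)] invariant_Diff_witness_region[OF assms(3)]
    by auto
  moreover have "L \<subseteq> M - K"
    using subset_witness_region[OF assms(3) K(3)] unfolding L_def by blast
  moreover have "global M \<phi> (K \<union> L)"
    using global_Un_Diff_witness_region[OF assms(3) K(3)] unfolding L_def .
  moreover have "W_set M \<phi> (K \<union> L)"
  proof (rule W_set_if_global)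
    show "invariant M \<phi> (K \<union> L)" using K(2) L(2) unfolding invariant_def by blast
  qed (use K(1) L(1) \<open>global M \<phi> (K \<union> L)\<close> in auto)
  ultimately show ?thesis
    using compact_invariant_subset_Diff_witness_region[of _ M \<phi> K] K(3)
      isolated_invariant_Diff_witness_region[OF assms(1,3,4)]
    unfolding L_def by blast
qed

end
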